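(* Let $G$ be a countable infinite group, let $N\lhd G$ be a finite normal subgroup and let $H=G/N$. If the universal minimal flow $M(H)$ has the separated covering property (as an $H$-flow), then $M(G)$ has the separated covering property (as a $G$-flow).
   Context: The universal minimal flow $M(G)$ is the (unique up to isomorphism) minimal $G$-flow admitting a $G$-equivariant continuous surjection onto every minimal $G$-flow. For finite $D\subseteq G$, $S\subseteq G$ is $D$-separated if $Dg\cap Dh=\emptyset$ for distinct $g,h\in S$. A minimal $G$-flow $X$ has the separated covering property if for every finite $D\subseteq G$ and every non-empty open $U\subseteq X$ there is a $D$-separated $S\subseteq G$ with $S^{-1}U=X$. *)

theory Defs
  imports "HOL-Analysis.Analysis" "HOL-Algebra.Coset"
begin

definition G_flow :: "('g, 'm) monoid_scheme \<Rightarrow> 'a topology \<Rightarrow> ('g \<Rightarrow> 'a \<Rightarrow> 'a) \<Rightarrow> bool" where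
  "G_flow G X act \<longleftrightarrow>
     group G \<and> compact_space X \<and> Hausdorff_space X \<and>
     (\<forall>g\<in>carrier G. continuous_map X X (act g)) \<and>
     (\<forall>x\<in>topspace X. act \<one>\<^bsub>G\<^esub> x = x) \<and>
     (\<forall>g\<in>carrier G. \<forall>h\<in>carrier G. \<forall>x\<in>topspace X.
         act (g \<otimes>\<^bsub>G\<^esub> h) x = act g (act h x))"

definition minimal_flow :: "('g, 'm) monoid_scheme \<Rightarrow> 'a topology \<Rightarrow> ('g \<Rightarrow> 'a \<Rightarrow> 'a) \<Rightarrow> bool" where
  "minimal_flow G X act \<longleftrightarrow>
     G_flow G X act \<and> topspace X \<noteq> {} \<and>
     (\<forall>Y. closedin X Y \<and> Y \<noteq> {} \<and> (\<forall>g\<in>carrier G. act g ` Y \<subseteq> Y) \<longrightarrow> Y = topspace X)"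

definition equivariant_factor_map ::
  "('g, 'm) monoid_scheme \<Rightarrow> 'a topology \<Rightarrow> ('g \<Rightarrow> 'a \<Rightarrow> 'a) \<Rightarrow>
   'b topology \<Rightarrow> ('g \<Rightarrow> 'b \<Rightarrow> 'b) \<Rightarrow> ('a \<Rightarrow> 'b) \<Rightarrow> bool" where
  "equivariant_factor_map G X act Y act' \<phi> \<longleftrightarrow>
     continuous_map X Y \<phi> \<and> \<phi> ` topspace X = topspace Y \<and>
     (\<forall>g\<in>carrier G. \<forall>x\<in>topspace X. \<phi> (act g x) = act' g (\<phi> x))"

text \<open>Since HOL cannot quantify over types inside a formula, the
target flows range over flows whose points lie in the type 'g set set; every
minimal G-flow is a factor of beta G and so has cardinality at most
2^(2^|G|), hence is isomorphic to such a flow.\<close>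
definition universal_minimal_flow :: "('g, 'm) monoid_scheme \<Rightarrow> 'a topology \<Rightarrow> ('g \<Rightarrow> 'a \<Rightarrow> 'a) \<Rightarrow> bool" where
  "universal_minimal_flow G X act \<longleftrightarrow>
     minimal_flow G X act \<and>
     (\<forall>(Y :: 'g set set topology) act'. minimal_flow G Y act' \<longrightarrow>
        (\<exists>\<phi>. equivariant_factor_map G X act Y act' \<phi>))"

definition D_separated :: "('g, 'm) monoid_scheme \<Rightarrow> 'g set \<Rightarrow> 'g set \<Rightarrow> bool" where
  "D_separated G D S \<longleftrightarrow>
     (\<forall>g\<in>S. \<forall>h\<in>S. g \<noteq> h \<longrightarrow> (D #>\<^bsub>G\<^esub> g) \<inter> (D #>\<^bsub>G\<^esub> h) = {})"

definition separated_covering_property :: "('g, 'm) monoid_scheme \<Rightarrow> 'a topology \<Rightarrow> ('g \<Rightarrow> 'a \<Rightarrow> 'a) \<Rightarrow> bool" where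
  "separated_covering_property G X act \<longleftrightarrow>
     (\<forall>D U. finite D \<and> D \<subseteq> carrier G \<and> openin X U \<and> U \<noteq> {} \<longrightarrow>
        (\<exists>S. S \<subseteq> carrier G \<and> D_separated G D S \<and>
             (\<Union>s\<in>S. act (inv\<^bsub>G\<^esub> s) ` U) = topspace X))"

end

theory Submission
  imports Defs
begin

definition quotient_topology :: "'a topology \<Rightarrow> ('a \<Rightarrow> 'b) \<Rightarrow> 'b topology" where
  "quotient_topology X f =
     topology (\<lambda>V. V \<subseteq> f ` topspace X \<and> openin X {x \<in> topspace X. f x \<in> V})"

lemma istopology_quotient_topology:
  "istopology (\<lambda>V. V \<subseteq> f ` topspace X \<and> openin X {x \<in> topspace X. f x \<in> V})"
proof -
  have "{x \<in> topspace X. f x \<in> S \<inter> T} = {x \<in> topspace X. f x \<in> S} \<inter> {x \<in> topspace X. f x \<in> T}"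
    and "{x \<in> topspace X. f x \<in> \<Union>\<K>} = (\<Union>V\<in>\<K>. {x \<in> topspace X. f x \<in> V})" for S T \<K>
    by auto
  then show ?thesis
    unfolding istopology_def by auto
qed

lemma openin_quotient_topology:
  "openin (quotient_topology X f) V \<longleftrightarrow> V \<subseteq> f ` topspace X \<and> openin X {x \<in> topspace X. f x \<in> V}"
  unfolding quotient_topology_def using istopology_quotient_topology[of f X] by simp

lemma topspace_quotient_topology: "topspace (quotient_topology X f) = f ` topspace X"
proof (rule subset_antisym)
  show "topspace (quotient_topology X f) \<subseteq> f ` topspace X"
    unfolding topspace_def openin_quotient_topology by blast
  have "{x \<in> topspace X. f x \<in> f ` topspace X} = topspace X"
    by auto
  then have "openin (quotient_topology X f) (f ` topspace X)"
    unfolding openin_quotient_topology by simp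
  then show "f ` topspace X \<subseteq> topspace (quotient_topology X f)"
    by (rule openin_subset)
qed

lemma quotient_map_quotient_topology: "quotient_map X (quotient_topology X f) f"
  by (auto simp: quotient_map_def topspace_quotient_topology openin_quotient_topology)

lemma compact_space_quotient_topology:
  "compact_space X \<Longrightarrow> compact_space (quotient_topology X f)"
  by (metis compact_space_def image_compactin quotient_imp_continuous_map
      quotient_map_quotient_topology topspace_quotient_topology)

lemma G_flow_group: "G_flow G X act \<Longrightarrow> group G"
  unfolding G_flow_def by blast

lemma G_flow_continuous_map: "G_flow G X act \<Longrightarrow> g \<in> carrier G \<Longrightarrow> continuous_map X X (act g)"
  unfolding G_flow_def by blast

lemma G_flow_act_in_topspace:
  assumes "G_flow G X act" "g \<in> carrier G" "x \<in> topspace X"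
  shows "act g x \<in> topspace X"
  using continuous_map_image_subset_topspace[OF G_flow_continuous_map[OF assms(1,2)]] assms(3)
  by blast

lemma G_flow_act_mult:
  "G_flow G X act \<Longrightarrow> g \<in> carrier G \<Longrightarrow> h \<in> carrier G \<Longrightarrow> x \<in> topspace X \<Longrightarrow>
   act (g \<otimes>\<^bsub>G\<^esub> h) x = act g (act h x)"
  unfolding G_flow_def by blast

lemma G_flow_act_one: "G_flow G X act \<Longrightarrow> x \<in> topspace X \<Longrightarrow> act \<one>\<^bsub>G\<^esub> x = x"
  unfolding G_flow_def by blast

lemma G_flow_act_inv_act:
  assumes "G_flow G X act" "g \<in> carrier G" "x \<in> topspace X"
  shows "act (inv\<^bsub>G\<^esub> g) (act g x) = x"
proof -
  interpret group G using assms(1) by (rule G_flow_group)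
  have "act (inv\<^bsub>G\<^esub> g) (act g x) = act (inv\<^bsub>G\<^esub> g \<otimes>\<^bsub>G\<^esub> g) x"
    using G_flow_act_mult[OF assms(1) inv_closed[OF assms(2)] assms(2,3)] by simp
  also have "\<dots> = x"
    using assms by (simp add: G_flow_act_one)
  finally show ?thesis .
qed

lemma openin_G_flow_preimage:
  "G_flow G X act \<Longrightarrow> g \<in> carrier G \<Longrightarrow> openin X U \<Longrightarrow> openin X {x \<in> topspace X. act g x \<in> U}"
  by (rule openin_continuous_map_preimage[OF G_flow_continuous_map])

lemma openin_G_flow_all_translates:
  assumes "G_flow G X act" "finite I" "\<And>i. i \<in> I \<Longrightarrow> g i \<in> carrier G" "openin X U"
  shows "openin X {x \<in> topspace X. \<forall>i\<in>I. act (g i) x \<in> U}"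
proof -
  have "{x \<in> topspace X. \<forall>i\<in>I. act (g i) x \<in> U} =
        (\<Inter>i\<in>I. {x \<in> topspace X. act (g i) x \<in> U}) \<inter> topspace X"
    by auto
  then show ?thesis
    using openin_INT[OF assms(2) openin_G_flow_preimage[OF assms(1) assms(3) assms(4)]] by simp
qed

lemma minimal_flow_G_flow: "minimal_flow G X act \<Longrightarrow> G_flow G X act"
  unfolding minimal_flow_def by blast

lemma minimal_flowD:
  "minimal_flow G X act \<Longrightarrow> closedin X Y \<Longrightarrow> Y \<noteq> {} \<Longrightarrow> (\<forall>g\<in>carrier G. act g ` Y \<subseteq> Y) \<Longrightarrow>
   Y = topspace X"
  unfolding minimal_flow_def by blast

lemma minimal_flow_translates_cover:
  assumes M: "minimal_flow G X act" and U: "openin X U" "U \<noteq> {}"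
  shows "topspace X \<subseteq> (\<Union>g\<in>carrier G. {x \<in> topspace X. act g x \<in> U})"
proof (rule ccontr)
  have F: "G_flow G X act" using M by (rule minimal_flow_G_flow)
  interpret group G using F by (rule G_flow_group)
  define Y where "Y = topspace X - (\<Union>g\<in>carrier G. {x \<in> topspace X. act g x \<in> U})"
  assume "\<not> ?thesis"
  then have "Y \<noteq> {}" by (auto simp: Y_def)
  moreover have "closedin X Y"
    unfolding Y_def by (intro closedin_diff closedin_topspace openin_Union) 
      (auto intro: openin_G_flow_preimage[OF F _ U(1)])
  moreover have "act g ` Y \<subseteq> Y" if g: "g \<in> carrier G" for g
  proof
    fix y assume "y \<in> act g ` Y"
    then obtain x where x: "x \<in> topspace X" "y = act g x" "\<forall>k\<in>carrier G. act k x \<notin> U"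
      by (auto simp: Y_def)
    have "act k y \<notin> U" if "k \<in> carrier G" for k
    proof -
      have "act k y = act (k \<otimes>\<^bsub>G\<^esub> g) x"
        using G_flow_act_mult[OF F that g x(1)] x(2) by simp
      then show ?thesis
        using x(3) m_closed[OF that g] by simp
    qed
    then show "y \<in> Y"
      using G_flow_act_in_topspace[OF F g x(1)] x(2) by (auto simp: Y_def)
  qed
  ultimately have "Y = topspace X" using minimal_flowD[OF M] by blast
  obtain u where "u \<in> U" using U(2) by blast
  then have "u \<in> topspace X" "act \<one>\<^bsub>G\<^esub> u \<in> U"
    using openin_subset[OF U(1)] G_flow_act_one[OF F] by auto
  then have "u \<in> (\<Union>g\<in>carrier G. {x \<in> topspace X. act g x \<in> U})"
    by (intro UN_I[OF one_closed]) simp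
  moreover have "u \<in> Y"
    using \<open>Y = topspace X\<close> \<open>u \<in> topspace X\<close> by simp
  ultimately show False
    unfolding Y_def by blast
qed

lemma minimal_flow_finite_translates_cover:
  assumes M: "minimal_flow G X act" and U: "openin X U" "U \<noteq> {}"
  obtains K where "finite K" "K \<subseteq> carrier G"
    "topspace X \<subseteq> (\<Union>k\<in>K. {x \<in> topspace X. act k x \<in> U})"
proof -
  have F: "G_flow G X act" using M by (rule minimal_flow_G_flow)
  define V where "V g = {x \<in> topspace X. act g x \<in> U}" for g
  have "compact_space X" using F unfolding G_flow_def by blast
  then have "(\<forall>W\<in>V ` carrier G. openin X W) \<and> topspace X \<subseteq> \<Union>(V ` carrier G) \<longrightarrow>
      (\<exists>\<F>. finite \<F> \<and> \<F> \<subseteq> V ` carrier G \<and> topspace X \<subseteq> \<Union>\<F>)"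
    unfolding compact_space_alt by (rule spec)
  moreover have "\<forall>W\<in>V ` carrier G. openin X W"
    using openin_G_flow_preimage[OF F _ U(1)] unfolding V_def by blast
  moreover have "topspace X \<subseteq> \<Union>(V ` carrier G)"
    using minimal_flow_translates_cover[OF M U] unfolding V_def .
  ultimately obtain \<F> where \<F>: "finite \<F>" "\<F> \<subseteq> V ` carrier G" "topspace X \<subseteq> \<Union>\<F>"
    by blast
  then obtain K where K: "K \<subseteq> carrier G" "finite K" "\<F> = V ` K"
    by (meson finite_subset_image)
  show ?thesis
  proof (rule that)
    show "topspace X \<subseteq> (\<Union>k\<in>K. {x \<in> topspace X. act k x \<in> U})"
      using \<F>(3) unfolding K(3) V_def .
  qed (use K in auto)
qed

lemma minimal_flow_return_times_infinite:
  assumes M: "minimal_flow G X act" and "infinite (carrier G)"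
    and U: "openin X U" "U \<noteq> {}" and y: "y \<in> topspace X"
  shows "infinite {g \<in> carrier G. act g y \<in> U}"
proof
  define R where "R = {g \<in> carrier G. act g y \<in> U}"
  assume "finite {g \<in> carrier G. act g y \<in> U}"
  then have "finite R" by (simp add: R_def)
  have F: "G_flow G X act" using M by (rule minimal_flow_G_flow)
  interpret group G using F by (rule G_flow_group)
  obtain K where K: "finite K" "K \<subseteq> carrier G"
    "topspace X \<subseteq> (\<Union>k\<in>K. {x \<in> topspace X. act k x \<in> U})"
    using minimal_flow_finite_translates_cover[OF M U] by blast
  have "carrier G \<subseteq> (\<lambda>(k, r). inv\<^bsub>G\<^esub> k \<otimes>\<^bsub>G\<^esub> r) ` (K \<times> R)"
  proof
    fix g assume g: "g \<in> carrier G"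
    have "act g y \<in> topspace X"
      using G_flow_act_in_topspace[OF F g y] .
    then obtain k where k: "k \<in> K" "act k (act g y) \<in> U"
      using K(3) by blast
    have kc: "k \<in> carrier G" using K(2) k(1) by blast
    have "k \<otimes>\<^bsub>G\<^esub> g \<in> R"
      using G_flow_act_mult[OF F kc g y] k(2) m_closed[OF kc g] by (simp add: R_def)
    moreover have "inv\<^bsub>G\<^esub> k \<otimes>\<^bsub>G\<^esub> (k \<otimes>\<^bsub>G\<^esub> g) = g"
      using kc g by (simp add: m_assoc[symmetric])
    ultimately have "(k, k \<otimes>\<^bsub>G\<^esub> g) \<in> K \<times> R"
      "g = (\<lambda>(k, r). inv\<^bsub>G\<^esub> k \<otimes>\<^bsub>G\<^esub> r) (k, k \<otimes>\<^bsub>G\<^esub> g)"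
      using k(1) by simp_all
    then show "g \<in> (\<lambda>(k, r). inv\<^bsub>G\<^esub> k \<otimes>\<^bsub>G\<^esub> r) ` (K \<times> R)"
      by (rule rev_image_eqI)
  qed
  moreover have "finite ((\<lambda>(k, r). inv\<^bsub>G\<^esub> k \<otimes>\<^bsub>G\<^esub> r) ` (K \<times> R))"
    using K(1) \<open>finite R\<close> by (intro finite_imageI finite_cartesian_product)
  ultimately show False
    using assms(2) finite_subset by blast
qed

lemma minimal_flow_separated_return_times:
  assumes M: "minimal_flow G X act" and inf: "infinite (carrier G)"
    and U: "openin X U" "U \<noteq> {}" and D: "finite D" "D \<subseteq> carrier G"
    and "finite I" and "\<And>i. i \<in> I \<Longrightarrow> p i \<in> topspace X"
  shows "\<exists>h. \<forall>i\<in>I. h i \<in> carrier G \<and> act (h i) (p i) \<in> U \<and>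
            (\<forall>j\<in>I. j \<noteq> i \<longrightarrow> (\<forall>d\<in>D. \<forall>d'\<in>D. d \<otimes>\<^bsub>G\<^esub> h i \<noteq> d' \<otimes>\<^bsub>G\<^esub> h j))"
  using assms(7,8)
proof (induction I rule: finite_induct)
  case empty
  show ?case by simp
next
  case (insert a I)
  interpret group G using M by (intro G_flow_group minimal_flow_G_flow)
  have "\<And>i. i \<in> I \<Longrightarrow> p i \<in> topspace X"
    using insert.prems by simp
  then obtain h where h: "\<forall>i\<in>I. h i \<in> carrier G \<and> act (h i) (p i) \<in> U \<and>
            (\<forall>j\<in>I. j \<noteq> i \<longrightarrow> (\<forall>d\<in>D. \<forall>d'\<in>D. d \<otimes>\<^bsub>G\<^esub> h i \<noteq> d' \<otimes>\<^bsub>G\<^esub> h j))"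
    using insert.IH by blast
  \<comment> \<open>the new time must avoid the finitely many \<open>g\<close> with \<open>D g \<inter> D (h j) \<noteq> {}\<close>\<close>
  define B where "B = (\<lambda>(d, d', j). inv\<^bsub>G\<^esub> d \<otimes>\<^bsub>G\<^esub> (d' \<otimes>\<^bsub>G\<^esub> h j)) ` (D \<times> D \<times> I)"
  have "finite B" unfolding B_def using D(1) insert.hyps(1) by simp
  then have "infinite ({g \<in> carrier G. act g (p a) \<in> U} - B)"
    using minimal_flow_return_times_infinite[OF M inf U] insert.prems by (simp add: Diff_infinite_finite)
  then obtain g where "g \<in> {g \<in> carrier G. act g (p a) \<in> U} - B"
    by (metis ex_in_conv infinite_imp_nonempty)
  then have g: "g \<in> carrier G" "act g (p a) \<in> U" "g \<notin> B"
    by auto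
  have new: "d \<otimes>\<^bsub>G\<^esub> g \<noteq> d' \<otimes>\<^bsub>G\<^esub> h j" if "d \<in> D" "d' \<in> D" "j \<in> I" for d d' j
  proof
    assume eq: "d \<otimes>\<^bsub>G\<^esub> g = d' \<otimes>\<^bsub>G\<^esub> h j"
    have "d \<in> carrier G" "d' \<otimes>\<^bsub>G\<^esub> h j \<in> carrier G"
      using that D(2) h by auto
    then have "g = (\<lambda>(d, d', j). inv\<^bsub>G\<^esub> d \<otimes>\<^bsub>G\<^esub> (d' \<otimes>\<^bsub>G\<^esub> h j)) (d, d', j)"
      using inv_solve_left[OF g(1)] eq by simp
    moreover have "(d, d', j) \<in> D \<times> D \<times> I"
      using that by simp
    ultimately have "g \<in> B"
      unfolding B_def by (intro rev_image_eqI)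
    then show False
      using g(3) by simp
  qed
  have new': "d' \<otimes>\<^bsub>G\<^esub> h j \<noteq> d \<otimes>\<^bsub>G\<^esub> g" if "d \<in> D" "d' \<in> D" "j \<in> I" for d d' j
    using new[OF that] by (rule not_sym)
  define h' where "h' = h(a := g)"
  have h'a: "h' a = g" and h'I: "\<And>i. i \<in> I \<Longrightarrow> h' i = h i"
    using insert.hyps(2) by (auto simp: h'_def)
  show ?case
  proof (intro exI[of _ h'] ballI)
    fix i assume i: "i \<in> insert a I"
    show "h' i \<in> carrier G \<and> act (h' i) (p i) \<in> U \<and>
      (\<forall>j\<in>insert a I. j \<noteq> i \<longrightarrow> (\<forall>d\<in>D. \<forall>d'\<in>D. d \<otimes>\<^bsub>G\<^esub> h' i \<noteq> d' \<otimes>\<^bsub>G\<^esub> h' j))"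
    proof (cases "i = a")
      case True
      then show ?thesis
        using g new h'a h'I by auto
    next
      case False
      then have "i \<in> I" using i by simp
      then show ?thesis
        using h new' h'a h'I by auto
    qed
  qed
qed

lemma G_flow_quotient_topology:
  assumes X: "G_flow G X act" and K: "group K"
    and hom: "\<sigma> \<in> hom G K" and onto: "\<sigma> ` carrier G = carrier K"
    and T2: "Hausdorff_space (quotient_topology X f)"
    and equiv: "\<And>g x. g \<in> carrier G \<Longrightarrow> x \<in> topspace X \<Longrightarrow> f (act g x) = act' (\<sigma> g) (f x)"
  shows "G_flow K (quotient_topology X f) act'"
proof -
  interpret G: group G using X by (rule G_flow_group)
  have q: "quotient_map X (quotient_topology X f) f"
    by (rule quotient_map_quotient_topology)
  have cont: "continuous_map (quotient_topology X f) (quotient_topology X f) (act' (\<sigma> g))"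
    if g: "g \<in> carrier G" for g
  proof (rule continuous_compose_quotient_map[OF q])
    have "continuous_map X (quotient_topology X f) (f \<circ> act g)"
      using G_flow_continuous_map[OF X g] quotient_imp_continuous_map[OF q]
      by (rule continuous_map_compose)
    then show "continuous_map X (quotient_topology X f) (act' (\<sigma> g) \<circ> f)"
      by (rule continuous_map_eq) (simp add: equiv g)
  qed
  have one: "act' \<one>\<^bsub>K\<^esub> (f x) = f x" if x: "x \<in> topspace X" for x
  proof -
    have "act' \<one>\<^bsub>K\<^esub> (f x) = act' (\<sigma> \<one>\<^bsub>G\<^esub>) (f x)"
      using hom_one[OF hom G.is_group K] by simp
    also have "\<dots> = f (act \<one>\<^bsub>G\<^esub> x)"
      by (rule equiv[OF G.one_closed x, symmetric])
    also have "\<dots> = f x"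
      using G_flow_act_one[OF X x] by simp
    finally show ?thesis .
  qed
  have mult: "act' (\<sigma> g \<otimes>\<^bsub>K\<^esub> \<sigma> h) (f x) = act' (\<sigma> g) (act' (\<sigma> h) (f x))"
    if "g \<in> carrier G" "h \<in> carrier G" "x \<in> topspace X" for g h x
  proof -
    have "act' (\<sigma> g \<otimes>\<^bsub>K\<^esub> \<sigma> h) (f x) = f (act (g \<otimes>\<^bsub>G\<^esub> h) x)"
      using equiv[of "g \<otimes>\<^bsub>G\<^esub> h" x] hom_mult[OF hom] that by simp
    also have "\<dots> = f (act g (act h x))"
      using G_flow_act_mult[OF X that] by simp
    also have "\<dots> = act' (\<sigma> g) (act' (\<sigma> h) (f x))"
      using equiv G_flow_act_in_topspace[OF X] that by simp
    finally show ?thesis .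
  qed
  show ?thesis
    unfolding G_flow_def topspace_quotient_topology
  proof (intro conjI ballI)
    show "compact_space (quotient_topology X f)"
      using X unfolding G_flow_def by (blast intro: compact_space_quotient_topology)
    fix k assume "k \<in> carrier K"
    then obtain g where "g \<in> carrier G" "k = \<sigma> g" unfolding onto[symmetric] by blast
    then show "continuous_map (quotient_topology X f) (quotient_topology X f) (act' k)"
      using cont by simp
  next
    fix y assume "y \<in> f ` topspace X"
    then obtain x where "x \<in> topspace X" "y = f x" by blast
    then show "act' \<one>\<^bsub>K\<^esub> y = y" using one by simp
  next
    fix k1 k2 y assume "k1 \<in> carrier K" "k2 \<in> carrier K" "y \<in> f ` topspace X"
    then obtain g1 g2 x where "g1 \<in> carrier G" "g2 \<in> carrier G" "x \<in> topspace X"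
      "k1 = \<sigma> g1" "k2 = \<sigma> g2" "y = f x"
      unfolding onto[symmetric] by blast
    then show "act' (k1 \<otimes>\<^bsub>K\<^esub> k2) y = act' k1 (act' k2 y)" using mult by simp
  qed (use K T2 in auto)
qed

lemma minimal_flow_quotient_topology:
  assumes M: "minimal_flow G X act" and Y: "G_flow K (quotient_topology X f) act'"
    and \<sigma>: "\<sigma> \<in> carrier G \<rightarrow> carrier K"
    and equiv: "\<And>g x. g \<in> carrier G \<Longrightarrow> x \<in> topspace X \<Longrightarrow> f (act g x) = act' (\<sigma> g) (f x)"
  shows "minimal_flow K (quotient_topology X f) act'"
  unfolding minimal_flow_def
proof (intro conjI allI impI)
  have F: "G_flow G X act" using M by (rule minimal_flow_G_flow)
  show "G_flow K (quotient_topology X f) act'" by (rule Y)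
  show "topspace (quotient_topology X f) \<noteq> {}"
    using M unfolding minimal_flow_def topspace_quotient_topology by blast
  fix Z assume Z: "closedin (quotient_topology X f) Z \<and> Z \<noteq> {} \<and> (\<forall>k\<in>carrier K. act' k ` Z \<subseteq> Z)"
  then have ZY: "Z \<subseteq> f ` topspace X"
    using closedin_subset[of "quotient_topology X f" Z] unfolding topspace_quotient_topology by blast
  define P where "P = {x \<in> topspace X. f x \<in> Z}"
  have "closedin X P"
    unfolding P_def using Z closedin_continuous_map_preimage[OF quotient_imp_continuous_map[OF
      quotient_map_quotient_topology]] by blast
  moreover have "P \<noteq> {}" using Z ZY unfolding P_def by blast
  moreover have "act g ` P \<subseteq> P" if g: "g \<in> carrier G" for g
  proof
    fix y assume "y \<in> act g ` P"
    then obtain x where x: "x \<in> topspace X" "f x \<in> Z" "y = act g x" unfolding P_def by blast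
    have "f y = act' (\<sigma> g) (f x)" using equiv[OF g x(1)] x(3) by simp
    also have "\<dots> \<in> Z" using Z \<sigma> g x(2) by blast
    finally show "y \<in> P" unfolding P_def using G_flow_act_in_topspace[OF F g x(1)] x(3) by simp
  qed
  ultimately have "P = topspace X" using minimal_flowD[OF M] by blast
  then show "Z = topspace (quotient_topology X f)"
    unfolding topspace_quotient_topology using ZY P_def by auto
qed

lemma minimal_flow_orbit_dense:
  assumes M: "minimal_flow K Z act" and z0: "z0 \<in> topspace Z"
  shows "Z closure_of ((\<lambda>k. act k z0) ` carrier K) = topspace Z"
proof -
  have F: "G_flow K Z act" using M by (rule minimal_flow_G_flow)
  interpret group K using F by (rule G_flow_group)
  define Orb where "Orb = (\<lambda>k. act k z0) ` carrier K"
  have "Orb \<subseteq> topspace Z" unfolding Orb_def using G_flow_act_in_topspace[OF F _ z0] by blast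
  moreover have "z0 \<in> Orb" unfolding Orb_def using G_flow_act_one[OF F z0] one_closed by (metis image_eqI)
  ultimately have "Z closure_of Orb \<noteq> {}" using closure_of_subset by blast
  moreover have "act k ` (Z closure_of Orb) \<subseteq> Z closure_of Orb" if k: "k \<in> carrier K" for k
  proof -
    have "act k ` Orb \<subseteq> Orb"
    proof
      fix y assume "y \<in> act k ` Orb"
      then obtain j where j: "j \<in> carrier K" "y = act k (act j z0)" unfolding Orb_def by blast
      then have "y = act (k \<otimes>\<^bsub>K\<^esub> j) z0" using G_flow_act_mult[OF F k j(1) z0] by simp
      then show "y \<in> Orb" unfolding Orb_def using m_closed[OF k j(1)] by blast
    qed
    then have "Z closure_of (act k ` Orb) \<subseteq> Z closure_of Orb" by (rule closure_of_mono)
    moreover have "act k ` (Z closure_of Orb) \<subseteq> Z closure_of (act k ` Orb)"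
      by (rule continuous_map_image_closure_subset[OF G_flow_continuous_map[OF F k]])
    ultimately show ?thesis by blast
  qed
  ultimately show ?thesis
    using minimal_flowD[OF M closedin_closure_of] unfolding Orb_def by blast
qed

text \<open>A Hausdorff space with a dense subset indexed by \<open>I\<close> embeds into \<open>Pow (Pow I)\<close>:
  a point is coded by the sets of indices whose points accumulate at it.\<close>
lemma Hausdorff_inj_on_closure_code:
  assumes T2: "Hausdorff_space Z" and dense: "Z closure_of (p ` I) = topspace Z"
  shows "inj_on (\<lambda>z. {A. A \<subseteq> I \<and> z \<in> Z closure_of (p ` A)}) (topspace Z)"
proof (rule inj_onI, rule ccontr)
  fix z1 z2 assume z1: "z1 \<in> topspace Z" and z2: "z2 \<in> topspace Z" and ne: "z1 \<noteq> z2"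
    and eq: "{A. A \<subseteq> I \<and> z1 \<in> Z closure_of (p ` A)} = {A. A \<subseteq> I \<and> z2 \<in> Z closure_of (p ` A)}"
  obtain W1 W2 where W: "openin Z W1" "openin Z W2" "z1 \<in> W1" "z2 \<in> W2" "disjnt W1 W2"
    using T2 z1 z2 ne unfolding Hausdorff_space_def by blast
  define A where "A = {i \<in> I. p i \<in> W1}"
  have "p ` A = W1 \<inter> p ` I" unfolding A_def by auto
  moreover have "z1 \<in> W1 \<inter> (Z closure_of (p ` I))" using W(3) z1 dense by simp
  ultimately have "z1 \<in> Z closure_of (p ` A)"
    using openin_Int_closure_of_subset[OF W(1), of "p ` I"] by auto
  then have "z2 \<in> Z closure_of (p ` A)" using eq unfolding A_def by blast
  moreover have "W2 \<inter> p ` A = {}" using W(5) unfolding A_def disjnt_def by auto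
  then have "W2 \<inter> (Z closure_of (p ` A)) = {}"
    using openin_Int_closure_of_eq_empty[OF W(2)] by blast
  ultimately show False using W(4) by blast
qed

lemma minimal_flow_isomorphic_copy:
  fixes K :: "('k, 'm) monoid_scheme" and Z :: "'z topology" and act :: "'k \<Rightarrow> 'z \<Rightarrow> 'z"
  assumes M: "minimal_flow K Z act"
  shows "\<exists>(Y :: 'k set set topology) act' \<phi>.
    minimal_flow K Y act' \<and> equivariant_factor_map K Y act' Z act \<phi>"
proof -
  have F: "G_flow K Z act" using M by (rule minimal_flow_G_flow)
  have T2: "Hausdorff_space Z" using F unfolding G_flow_def by blast
  obtain z0 where z0: "z0 \<in> topspace Z" using M unfolding minimal_flow_def by blast
  define c where "c z = {A. A \<subseteq> carrier K \<and> z \<in> Z closure_of ((\<lambda>k. act k z0) ` A)}" for z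
  have "inj_on c (topspace Z)"
    unfolding c_def by (rule Hausdorff_inj_on_closure_code[OF T2 minimal_flow_orbit_dense[OF M z0]])
  then have hm: "homeomorphic_map Z (quotient_topology Z c) c"
    unfolding homeomorphic_map_def using quotient_map_quotient_topology by blast
  then obtain \<phi> where \<phi>: "homeomorphic_maps Z (quotient_topology Z c) c \<phi>"
    by (auto simp: homeomorphic_map_maps)
  then have \<phi>c: "\<And>z. z \<in> topspace Z \<Longrightarrow> \<phi> (c z) = z"
    and cont: "continuous_map (quotient_topology Z c) Z \<phi>"
    unfolding homeomorphic_maps_def by auto
  define act' where "act' k y = c (act k (\<phi> y))" for k y
  have equiv: "c (act k z) = act' k (c z)" if "z \<in> topspace Z" for k z
    using \<phi>c[OF that] by (simp add: act'_def)
  have "Hausdorff_space (quotient_topology Z c)"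
    using homeomorphic_Hausdorff_space[OF homeomorphic_map_imp_homeomorphic_space[OF hm]] T2 by simp
  have "G_flow K (quotient_topology Z c) act'"
  proof (rule G_flow_quotient_topology[OF F, where \<sigma> = id])
    show "Hausdorff_space (quotient_topology Z c)" by fact
    show "group K" using F by (rule G_flow_group)
    show "id \<in> hom K K" by (auto simp: hom_def)
  qed (simp_all add: equiv)
  then have "minimal_flow K (quotient_topology Z c) act'"
    by (rule minimal_flow_quotient_topology[OF M _, where \<sigma> = id]) (simp_all add: equiv)
  moreover have "equivariant_factor_map K (quotient_topology Z c) act' Z act \<phi>"
    unfolding equivariant_factor_map_def topspace_quotient_topology
  proof (intro conjI ballI)
    show "\<phi> ` c ` topspace Z = topspace Z"
      using \<phi>c by (simp add: image_image)
    fix k y assume "k \<in> carrier K" "y \<in> c ` topspace Z"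
    then show "\<phi> (act' k y) = act k (\<phi> y)"
      using \<phi>c G_flow_act_in_topspace[OF F] by (auto simp: act'_def)
  qed (rule cont)
  ultimately show ?thesis by blast
qed

lemma separated_covering_property_factor:
  assumes X: "G_flow G X act" and \<phi>: "equivariant_factor_map G X act Y act' \<phi>"
    and scp: "separated_covering_property G X act"
  shows "separated_covering_property G Y act'"
  unfolding separated_covering_property_def
proof (intro allI impI)
  fix D V assume DV: "finite D \<and> D \<subseteq> carrier G \<and> openin Y V \<and> V \<noteq> {}"
  interpret group G using X by (rule G_flow_group)
  have cont: "continuous_map X Y \<phi>" and onto: "\<phi> ` topspace X = topspace Y"
    and equiv: "\<And>g x. g \<in> carrier G \<Longrightarrow> x \<in> topspace X \<Longrightarrow> \<phi> (act g x) = act' g (\<phi> x)"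
    using \<phi> unfolding equivariant_factor_map_def by auto
  define U where "U = {x \<in> topspace X. \<phi> x \<in> V}"
  have VY: "V \<subseteq> topspace Y" using DV openin_subset by blast
  have "openin X U" unfolding U_def using openin_continuous_map_preimage[OF cont] DV by blast
  moreover have \<phi>U: "\<phi> ` U = V" unfolding U_def using onto VY by auto
  then have "U \<noteq> {}" using DV by auto
  ultimately obtain S where S: "S \<subseteq> carrier G" "D_separated G D S"
    "(\<Union>s\<in>S. act (inv\<^bsub>G\<^esub> s) ` U) = topspace X"
    using scp[unfolded separated_covering_property_def, rule_format, of D U] DV by blast
  have "\<phi> ` act (inv\<^bsub>G\<^esub> s) ` U = act' (inv\<^bsub>G\<^esub> s) ` V" if "s \<in> S" for s
  proof -
    have "\<phi> ` act (inv\<^bsub>G\<^esub> s) ` U = act' (inv\<^bsub>G\<^esub> s) ` \<phi> ` U"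
      unfolding image_image
    proof (rule image_cong[OF refl])
      fix u assume "u \<in> U"
      then show "\<phi> (act (inv\<^bsub>G\<^esub> s) u) = act' (inv\<^bsub>G\<^esub> s) (\<phi> u)"
        using equiv[OF inv_closed] S(1) that unfolding U_def by blast
    qed
    then show ?thesis unfolding \<phi>U .
  qed
  then have "(\<Union>s\<in>S. act' (inv\<^bsub>G\<^esub> s) ` V) = \<phi> ` (\<Union>s\<in>S. act (inv\<^bsub>G\<^esub> s) ` U)"
    by (simp add: image_UN)
  then have "(\<Union>s\<in>S. act' (inv\<^bsub>G\<^esub> s) ` V) = topspace Y"
    unfolding S(3) onto .
  then show "\<exists>S. S \<subseteq> carrier G \<and> D_separated G D S \<and> (\<Union>s\<in>S. act' (inv\<^bsub>G\<^esub> s) ` V) = topspace Y"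
    using S(1,2) by blast
qed

definition subgroup_orbit :: "'g set \<Rightarrow> ('g \<Rightarrow> 'b \<Rightarrow> 'b) \<Rightarrow> 'b \<Rightarrow> 'b set" where
  "subgroup_orbit N act x = (\<lambda>n. act n x) ` N"

definition coset_action :: "('g \<Rightarrow> 'b \<Rightarrow> 'b) \<Rightarrow> 'g set \<Rightarrow> 'b set \<Rightarrow> 'b set" where
  "coset_action act c S = (\<Union>a\<in>c. act a ` S)"

lemma (in normal) D_separated_lift:
  assumes D: "D \<subseteq> carrier G" and h: "h \<in> H \<rightarrow> carrier G"
    and h_sep: "\<And>n m d d'. \<lbrakk>n \<in> H; m \<in> H; n \<noteq> m; d \<in> D; d' \<in> D\<rbrakk> \<Longrightarrow> d \<otimes> h n \<noteq> d' \<otimes> h m"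
    and S: "D_separated (G Mod H) ((\<lambda>(d, n). H #> (d \<otimes> h n)) ` (D \<times> H)) S"
    and rep: "\<And>c. c \<in> S \<Longrightarrow> rep c \<in> carrier G \<and> c = H #> rep c"
  shows "D_separated G D ((\<lambda>(n, c). h n \<otimes> rep c) ` (H \<times> S))"
  unfolding D_separated_def
proof (intro ballI impI)
  define E where "E = (\<lambda>(d, n). H #> (d \<otimes> h n)) ` (D \<times> H)"
  fix t1 t2 assume t1: "t1 \<in> (\<lambda>(n, c). h n \<otimes> rep c) ` (H \<times> S)"
    and t2: "t2 \<in> (\<lambda>(n, c). h n \<otimes> rep c) ` (H \<times> S)" and ne: "t1 \<noteq> t2"
  obtain n1 c1 where a1: "n1 \<in> H" "c1 \<in> S" "t1 = h n1 \<otimes> rep c1" using t1 by auto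
  obtain n2 c2 where a2: "n2 \<in> H" "c2 \<in> S" "t2 = h n2 \<otimes> rep c2" using t2 by auto
  show "(D #> t1) \<inter> (D #> t2) = {}"
  proof (rule ccontr)
    assume "(D #> t1) \<inter> (D #> t2) \<noteq> {}"
    then obtain d1 d2 where d: "d1 \<in> D" "d2 \<in> D" "d1 \<otimes> t1 = d2 \<otimes> t2"
      unfolding r_coset_def by blast
    have e: "d1 \<otimes> h n1 \<in> carrier G" "d2 \<otimes> h n2 \<in> carrier G"
      "rep c1 \<in> carrier G" "rep c2 \<in> carrier G"
      using d(1,2) a1(1,2) a2(1,2) D h rep by auto
    have "d1 \<in> carrier G" "d2 \<in> carrier G" "h n1 \<in> carrier G" "h n2 \<in> carrier G"
      using d(1,2) a1(1) a2(1) D h by auto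
    then have eq: "d1 \<otimes> h n1 \<otimes> rep c1 = d2 \<otimes> h n2 \<otimes> rep c2"
      using d(3) a1(3) a2(3) e(3,4) by (simp add: m_assoc)
    show False
    proof (cases "c1 = c2")
      case True
      then have "d1 \<otimes> h n1 = d2 \<otimes> h n2"
        using eq right_cancel[OF e(3) e(1,2)] by simp
      then have "n1 = n2" using h_sep d(1,2) a1(1) a2(1) by blast
      then show False using ne True a1(3) a2(3) by simp
    next
      case False
      have "H #> (d1 \<otimes> h n1 \<otimes> rep c1) \<in> E #>\<^bsub>G Mod H\<^esub> c1"
        "H #> (d1 \<otimes> h n1 \<otimes> rep c1) \<in> E #>\<^bsub>G Mod H\<^esub> c2"
      proof -
        have "(H #> (d1 \<otimes> h n1)) \<otimes>\<^bsub>G Mod H\<^esub> c1 = H #> (d1 \<otimes> h n1 \<otimes> rep c1)"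
          using rcos_sum[OF e(1,3)] rep[OF a1(2)] by (simp add: FactGroup_def)
        moreover have "(H #> (d2 \<otimes> h n2)) \<otimes>\<^bsub>G Mod H\<^esub> c2 = H #> (d1 \<otimes> h n1 \<otimes> rep c1)"
          using rcos_sum[OF e(2,4)] rep[OF a2(2)] eq by (simp add: FactGroup_def)
        moreover have "H #> (d1 \<otimes> h n1) \<in> E" "H #> (d2 \<otimes> h n2) \<in> E"
          unfolding E_def using d(1,2) a1(1) a2(1) by auto
        ultimately show "H #> (d1 \<otimes> h n1 \<otimes> rep c1) \<in> E #>\<^bsub>G Mod H\<^esub> c1"
          "H #> (d1 \<otimes> h n1 \<otimes> rep c1) \<in> E #>\<^bsub>G Mod H\<^esub> c2"
          unfolding r_coset_def by force+
      qed
      moreover have "(E #>\<^bsub>G Mod H\<^esub> c1) \<inter> (E #>\<^bsub>G Mod H\<^esub> c2) = {}"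
        using S a1(2) a2(2) False unfolding D_separated_def E_def by blast
      ultimately show False by blast
    qed
  qed
qed

context
  fixes G :: "('g, 'm) monoid_scheme" and N :: "'g set"
    and X :: "'b topology" and act :: "'g \<Rightarrow> 'b \<Rightarrow> 'b"
  assumes normal: "N \<lhd> G" and flow: "G_flow G X act"
begin

interpretation N: normal N G by (rule normal)

lemma subgroup_orbit_subset_topspace:
  "x \<in> topspace X \<Longrightarrow> subgroup_orbit N act x \<subseteq> topspace X"
  unfolding subgroup_orbit_def using G_flow_act_in_topspace[OF flow N.mem_carrier] by blast

lemma mem_subgroup_orbit_self: "x \<in> topspace X \<Longrightarrow> x \<in> subgroup_orbit N act x"
  unfolding subgroup_orbit_def
  using G_flow_act_one[OF flow] subgroup.one_closed[OF N.subgroup_axioms] by (metis image_eqI)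

lemma subgroup_orbit_act_left:
  assumes g: "g \<in> carrier G" and x: "x \<in> topspace X"
  shows "subgroup_orbit N act (act g x) = act g ` subgroup_orbit N act x"
proof
  show "subgroup_orbit N act (act g x) \<subseteq> act g ` subgroup_orbit N act x"
  proof
    fix y assume "y \<in> subgroup_orbit N act (act g x)"
    then obtain n where n: "n \<in> N" "y = act n (act g x)" unfolding subgroup_orbit_def by blast
    define m where "m = inv\<^bsub>G\<^esub> g \<otimes>\<^bsub>G\<^esub> n \<otimes>\<^bsub>G\<^esub> g"
    have m: "m \<in> N" unfolding m_def using N.inv_op_closed1[OF g n(1)] .
    have "g \<otimes>\<^bsub>G\<^esub> m = n \<otimes>\<^bsub>G\<^esub> g"
      unfolding m_def using g N.mem_carrier[OF n(1)] by (simp add: N.m_assoc[symmetric])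
    then have "y = act (g \<otimes>\<^bsub>G\<^esub> m) x"
      using G_flow_act_mult[OF flow N.mem_carrier[OF n(1)] g x] n(2) by simp
    also have "\<dots> = act g (act m x)"
      using G_flow_act_mult[OF flow g N.mem_carrier[OF m] x] .
    finally show "y \<in> act g ` subgroup_orbit N act x"
      unfolding subgroup_orbit_def using m by blast
  qed
  show "act g ` subgroup_orbit N act x \<subseteq> subgroup_orbit N act (act g x)"
  proof
    fix y assume "y \<in> act g ` subgroup_orbit N act x"
    then obtain n where n: "n \<in> N" "y = act g (act n x)" unfolding subgroup_orbit_def by blast
    define m where "m = g \<otimes>\<^bsub>G\<^esub> n \<otimes>\<^bsub>G\<^esub> inv\<^bsub>G\<^esub> g"
    have m: "m \<in> N" unfolding m_def using N.inv_op_closed2[OF g n(1)] .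
    have "m \<otimes>\<^bsub>G\<^esub> g = g \<otimes>\<^bsub>G\<^esub> n"
      unfolding m_def using g N.mem_carrier[OF n(1)] by (simp add: N.m_assoc)
    then have "y = act (m \<otimes>\<^bsub>G\<^esub> g) x"
      using G_flow_act_mult[OF flow g N.mem_carrier[OF n(1)] x] n(2) by simp
    also have "\<dots> = act m (act g x)"
      using G_flow_act_mult[OF flow N.mem_carrier[OF m] g x] .
    finally show "y \<in> subgroup_orbit N act (act g x)"
      unfolding subgroup_orbit_def using m by blast
  qed
qed

lemma subgroup_orbit_act:
  assumes n: "n \<in> N" and x: "x \<in> topspace X"
  shows "subgroup_orbit N act (act n x) = subgroup_orbit N act x"
proof -
  have le: "subgroup_orbit N act (act n x) \<subseteq> subgroup_orbit N act x"
    if "n \<in> N" "x \<in> topspace X" for n x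
  proof
    fix y assume "y \<in> subgroup_orbit N act (act n x)"
    then obtain m where m: "m \<in> N" "y = act m (act n x)" unfolding subgroup_orbit_def by blast
    then have "y = act (m \<otimes>\<^bsub>G\<^esub> n) x"
      using G_flow_act_mult[OF flow N.mem_carrier N.mem_carrier that(2)] that(1) by simp
    then show "y \<in> subgroup_orbit N act x"
      unfolding subgroup_orbit_def using subgroup.m_closed[OF N.subgroup_axioms m(1) that(1)] by blast
  qed
  have "x = act (inv\<^bsub>G\<^esub> n) (act n x)"
    using G_flow_act_inv_act[OF flow N.mem_carrier[OF n] x] by simp
  then have "subgroup_orbit N act x \<subseteq> subgroup_orbit N act (act n x)"
    using le[OF N.m_inv_closed[OF n] G_flow_act_in_topspace[OF flow N.mem_carrier[OF n] x]] by simp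
  with le[OF n x] show ?thesis by blast
qed

lemma subgroup_orbit_eqD:
  assumes "subgroup_orbit N act x = subgroup_orbit N act y" and "y \<in> topspace X"
  shows "\<exists>n\<in>N. y = act n x"
proof -
  have "y \<in> subgroup_orbit N act x"
    using mem_subgroup_orbit_self[OF assms(2)] assms(1) by simp
  then show ?thesis
    unfolding subgroup_orbit_def by blast
qed

lemma coset_action_subgroup_orbit:
  assumes g: "g \<in> carrier G" and x: "x \<in> topspace X"
  shows "coset_action act (N #>\<^bsub>G\<^esub> g) (subgroup_orbit N act x) = subgroup_orbit N act (act g x)"
proof -
  have translate: "act (n \<otimes>\<^bsub>G\<^esub> g) ` subgroup_orbit N act x = subgroup_orbit N act (act g x)"
    if n: "n \<in> N" for n
  proof -
    have "act (n \<otimes>\<^bsub>G\<^esub> g) ` subgroup_orbit N act x = act n ` act g ` subgroup_orbit N act x"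
      unfolding image_image
    proof (rule image_cong[OF refl])
      fix u assume "u \<in> subgroup_orbit N act x"
      then have "u \<in> topspace X" using subgroup_orbit_subset_topspace[OF x] by blast
      then show "act (n \<otimes>\<^bsub>G\<^esub> g) u = act n (act g u)"
        by (rule G_flow_act_mult[OF flow N.mem_carrier[OF n] g])
    qed
    also have "\<dots> = subgroup_orbit N act (act n (act g x))"
      using subgroup_orbit_act_left[OF g x]
        subgroup_orbit_act_left[OF N.mem_carrier[OF n] G_flow_act_in_topspace[OF flow g x]] by simp
    also have "\<dots> = subgroup_orbit N act (act g x)"
      by (rule subgroup_orbit_act[OF n G_flow_act_in_topspace[OF flow g x]])
    finally show ?thesis .
  qed
  have "coset_action act (N #>\<^bsub>G\<^esub> g) (subgroup_orbit N act x) =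
      (\<Union>n\<in>N. act (n \<otimes>\<^bsub>G\<^esub> g) ` subgroup_orbit N act x)"
    unfolding coset_action_def r_coset_def by auto
  also have "\<dots> = (\<Union>n\<in>N. subgroup_orbit N act (act g x))"
    using translate by simp
  also have "\<dots> = subgroup_orbit N act (act g x)"
    using subgroup.one_closed[OF N.subgroup_axioms] by blast
  finally show ?thesis .
qed

lemma openin_image_subgroup_orbit:
  assumes U: "openin X U"
  shows "openin (quotient_topology X (subgroup_orbit N act)) (subgroup_orbit N act ` U)"
  unfolding openin_quotient_topology
proof
  have UX: "U \<subseteq> topspace X" using openin_subset[OF U] .
  then show "subgroup_orbit N act ` U \<subseteq> subgroup_orbit N act ` topspace X" by blast
  have "{x \<in> topspace X. subgroup_orbit N act x \<in> subgroup_orbit N act ` U} =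
      (\<Union>n\<in>N. {x \<in> topspace X. act n x \<in> U})"
  proof (intro equalityI subsetI)
    fix x assume "x \<in> {x \<in> topspace X. subgroup_orbit N act x \<in> subgroup_orbit N act ` U}"
    then obtain u where u: "x \<in> topspace X" "u \<in> U" "subgroup_orbit N act x = subgroup_orbit N act u"
      by blast
    then obtain n where "n \<in> N" "u = act n x" using subgroup_orbit_eqD UX by blast
    then show "x \<in> (\<Union>n\<in>N. {x \<in> topspace X. act n x \<in> U})" using u(1,2) by blast
  next
    fix x assume "x \<in> (\<Union>n\<in>N. {x \<in> topspace X. act n x \<in> U})"
    then obtain n where n: "n \<in> N" "x \<in> topspace X" "act n x \<in> U" by blast
    then have "subgroup_orbit N act x = subgroup_orbit N act (act n x)"
      using subgroup_orbit_act by simp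
    then show "x \<in> {x \<in> topspace X. subgroup_orbit N act x \<in> subgroup_orbit N act ` U}"
      using n by blast
  qed
  moreover have "openin X (\<Union>n\<in>N. {x \<in> topspace X. act n x \<in> U})"
    using openin_G_flow_preimage[OF flow N.mem_carrier U] by blast
  ultimately show "openin X {x \<in> topspace X. subgroup_orbit N act x \<in> subgroup_orbit N act ` U}"
    by simp
qed

lemma all_translates_saturated:
  assumes "z \<in> topspace X" "w \<in> topspace X" "subgroup_orbit N act z = subgroup_orbit N act w"
    and "\<forall>n\<in>N. act n w \<in> U"
  shows "\<forall>n\<in>N. act n z \<in> U"
proof
  fix n assume n: "n \<in> N"
  obtain m where m: "m \<in> N" "z = act m w" using subgroup_orbit_eqD assms(1,3) by metis
  have "act n z = act (n \<otimes>\<^bsub>G\<^esub> m) w"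
    using G_flow_act_mult[OF flow N.mem_carrier[OF n] N.mem_carrier[OF m(1)] assms(2)] m(2) by simp
  then show "act n z \<in> U" using assms(4) subgroup.m_closed[OF N.subgroup_axioms n m(1)] by simp
qed

lemma Hausdorff_space_quotient_subgroup_orbit:
  assumes fin: "finite N"
  shows "Hausdorff_space (quotient_topology X (subgroup_orbit N act))"
  unfolding Hausdorff_space_def topspace_quotient_topology
proof (intro allI impI)
  fix p q
  assume "p \<in> subgroup_orbit N act ` topspace X \<and> q \<in> subgroup_orbit N act ` topspace X \<and> p \<noteq> q"
  then obtain x y where xy: "x \<in> topspace X" "y \<in> topspace X"
    "p = subgroup_orbit N act x" "q = subgroup_orbit N act y" "p \<noteq> q"
    by blast
  have compact: "compactin X (subgroup_orbit N act z)" if "z \<in> topspace X" for z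
  proof (rule finite_imp_compactin)
    show "subgroup_orbit N act z \<subseteq> topspace X"
      using subgroup_orbit_subset_topspace[OF that] .
    show "finite (subgroup_orbit N act z)"
      unfolding subgroup_orbit_def using fin by (rule finite_imageI)
  qed
  have disj: "disjnt (subgroup_orbit N act x) (subgroup_orbit N act y)"
    unfolding disjnt_iff
  proof (intro allI notI)
    fix z assume "z \<in> subgroup_orbit N act x \<and> z \<in> subgroup_orbit N act y"
    then obtain n1 n2 where n: "n1 \<in> N" "n2 \<in> N" "z = act n1 x" "z = act n2 y"
      unfolding subgroup_orbit_def by blast
    have "p = subgroup_orbit N act z"
      using xy(3) n(3) subgroup_orbit_act[OF n(1) xy(1)] by simp
    moreover have "q = subgroup_orbit N act z"
      using xy(4) n(4) subgroup_orbit_act[OF n(2) xy(2)] by simp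
    ultimately show False using xy(5) by simp
  qed
  have "Hausdorff_space X" using flow unfolding G_flow_def by blast
  then obtain U1 U2 where U: "openin X U1" "openin X U2"
    "subgroup_orbit N act x \<subseteq> U1" "subgroup_orbit N act y \<subseteq> U2" "disjnt U1 U2"
    using Hausdorff_space_compact_separation compact[OF xy(1)] compact[OF xy(2)] disj by metis
  \<comment> \<open>the largest saturated subsets of \<open>U1\<close>, \<open>U2\<close> have disjoint orbit images\<close>
  define W where "W U = {z \<in> topspace X. \<forall>n\<in>N. act n z \<in> U}" for U
  have W_open: "openin (quotient_topology X (subgroup_orbit N act)) (subgroup_orbit N act ` W U)"
    if "openin X U" for U
  proof (rule openin_image_subgroup_orbit)
    show "openin X (W U)"
      unfolding W_def using openin_G_flow_all_translates[OF flow fin N.mem_carrier that] .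
  qed
  have "x \<in> W U1" "y \<in> W U2"
    using xy(1,2) U(3,4) unfolding W_def subgroup_orbit_def by auto
  then have "p \<in> subgroup_orbit N act ` W U1" "q \<in> subgroup_orbit N act ` W U2"
    using xy(3,4) by simp_all
  moreover have "disjnt (subgroup_orbit N act ` W U1) (subgroup_orbit N act ` W U2)"
    unfolding disjnt_iff
  proof (intro allI notI)
    fix r assume "r \<in> subgroup_orbit N act ` W U1 \<and> r \<in> subgroup_orbit N act ` W U2"
    then obtain w1 w2 where w: "w1 \<in> W U1" "w2 \<in> W U2"
      "subgroup_orbit N act w1 = subgroup_orbit N act w2"
      by blast
    have w1: "w1 \<in> topspace X" "\<forall>n\<in>N. act n w1 \<in> U1"
      using w(1) unfolding W_def by auto
    have w2: "w2 \<in> topspace X" "\<forall>n\<in>N. act n w2 \<in> U2"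
      using w(2) unfolding W_def by auto
    have "\<forall>n\<in>N. act n w1 \<in> U2"
      by (rule all_translates_saturated[OF w1(1) w2(1) w(3) w2(2)])
    then have "act \<one>\<^bsub>G\<^esub> w1 \<in> U1 \<inter> U2"
      using w1(2) subgroup.one_closed[OF N.subgroup_axioms] by blast
    then have "w1 \<in> U1 \<inter> U2"
      using G_flow_act_one[OF flow w1(1)] by simp
    then show False using U(5) unfolding disjnt_def by blast
  qed
  ultimately show "\<exists>U V. openin (quotient_topology X (subgroup_orbit N act)) U \<and>
      openin (quotient_topology X (subgroup_orbit N act)) V \<and> p \<in> U \<and> q \<in> V \<and> disjnt U V"
    using W_open U(1,2) by blast
qed

lemma minimal_flow_quotient_subgroup_orbit:
  assumes "finite N" and M: "minimal_flow G X act"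
  shows "minimal_flow (G Mod N) (quotient_topology X (subgroup_orbit N act)) (coset_action act)"
proof -
  have equiv: "subgroup_orbit N act (act g x) = coset_action act (N #>\<^bsub>G\<^esub> g) (subgroup_orbit N act x)"
    if "g \<in> carrier G" "x \<in> topspace X" for g x
    using coset_action_subgroup_orbit[OF that] by simp
  have hom: "(\<lambda>g. N #>\<^bsub>G\<^esub> g) \<in> hom G (G Mod N)"
    by (rule N.r_coset_hom_Mod)
  have onto: "(\<lambda>g. N #>\<^bsub>G\<^esub> g) ` carrier G = carrier (G Mod N)"
    by (simp add: carrier_FactGroup)
  have "G_flow (G Mod N) (quotient_topology X (subgroup_orbit N act)) (coset_action act)"
    using flow N.factorgroup_is_group hom onto Hausdorff_space_quotient_subgroup_orbit[OF assms(1)] equiv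
    by (rule G_flow_quotient_topology)
  moreover have "(\<lambda>g. N #>\<^bsub>G\<^esub> g) \<in> carrier G \<rightarrow> carrier (G Mod N)"
    using hom_in_carrier[OF hom] by (rule Pi_I)
  ultimately show ?thesis
    using M equiv by (intro minimal_flow_quotient_topology)
qed

lemma cover_lift:
  assumes h: "\<And>n. n \<in> N \<Longrightarrow> h n \<in> carrier G" and U: "U \<subseteq> topspace X"
    and S: "S \<subseteq> carrier (G Mod N)"
    and rep: "\<And>c. c \<in> S \<Longrightarrow> rep c \<in> carrier G \<and> c = N #>\<^bsub>G\<^esub> rep c"
    and cover: "(\<Union>c\<in>S. coset_action act (inv\<^bsub>G Mod N\<^esub> c) `
        subgroup_orbit N act ` {u \<in> topspace X. \<forall>n\<in>N. act (h n \<otimes>\<^bsub>G\<^esub> n) u \<in> U}) =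
      topspace (quotient_topology X (subgroup_orbit N act))"
  shows "(\<Union>t\<in>(\<lambda>(n, c). h n \<otimes>\<^bsub>G\<^esub> rep c) ` (N \<times> S). act (inv\<^bsub>G\<^esub> t) ` U) = topspace X"
proof (intro equalityI subsetI)
  fix y assume "y \<in> (\<Union>t\<in>(\<lambda>(n, c). h n \<otimes>\<^bsub>G\<^esub> rep c) ` (N \<times> S). act (inv\<^bsub>G\<^esub> t) ` U)"
  then obtain n c u where ncu: "n \<in> N" "c \<in> S" "u \<in> U"
    and y: "y = act (inv\<^bsub>G\<^esub> (h n \<otimes>\<^bsub>G\<^esub> rep c)) u"
    by auto
  have "inv\<^bsub>G\<^esub> (h n \<otimes>\<^bsub>G\<^esub> rep c) \<in> carrier G"
    using h[OF ncu(1)] rep[OF ncu(2)] by simp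
  then show "y \<in> topspace X"
    unfolding y using G_flow_act_in_topspace[OF flow] U ncu(3) by blast
next
  fix y assume y: "y \<in> topspace X"
  then have "subgroup_orbit N act y \<in> topspace (quotient_topology X (subgroup_orbit N act))"
    unfolding topspace_quotient_topology by (rule imageI)
  then obtain c u where c: "c \<in> S" and u: "u \<in> topspace X" "\<forall>n\<in>N. act (h n \<otimes>\<^bsub>G\<^esub> n) u \<in> U"
    and yu: "subgroup_orbit N act y = coset_action act (inv\<^bsub>G Mod N\<^esub> c) (subgroup_orbit N act u)"
    unfolding cover[symmetric] by auto
  define s where "s = rep c"
  have s: "s \<in> carrier G" "c = N #>\<^bsub>G\<^esub> s"
    using rep[OF c] unfolding s_def by (rule conjunct1, rule conjunct2)
  have "inv\<^bsub>G Mod N\<^esub> c = set_inv\<^bsub>G\<^esub> c"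
    using N.inv_FactGroup S c by blast
  also have "\<dots> = N #>\<^bsub>G\<^esub> inv\<^bsub>G\<^esub> s"
    unfolding s(2) by (rule N.rcos_inv[OF s(1)])
  finally have "y \<in> subgroup_orbit N act (act (inv\<^bsub>G\<^esub> s) u)"
    using yu mem_subgroup_orbit_self[OF y]
      coset_action_subgroup_orbit[OF N.inv_closed[OF s(1)] u(1)] by simp
  then obtain n where n: "n \<in> N" "y = act (inv\<^bsub>G\<^esub> s) (act n u)"
    using subgroup_orbit_act_left[OF N.inv_closed[OF s(1)] u(1)]
    unfolding subgroup_orbit_def by auto
  define w where "w = act (h n \<otimes>\<^bsub>G\<^esub> n) u"
  have w: "w \<in> U" "w \<in> topspace X" using u(2) n(1) U unfolding w_def by auto
  have "act n u = act (inv\<^bsub>G\<^esub> h n) w"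
    unfolding w_def using G_flow_act_mult[OF flow h[OF n(1)] N.mem_carrier[OF n(1)] u(1)]
      G_flow_act_inv_act[OF flow h[OF n(1)] G_flow_act_in_topspace[OF flow N.mem_carrier[OF n(1)] u(1)]]
    by simp
  then have "y = act (inv\<^bsub>G\<^esub> s \<otimes>\<^bsub>G\<^esub> inv\<^bsub>G\<^esub> h n) w"
    using n(2) G_flow_act_mult[OF flow N.inv_closed[OF s(1)] N.inv_closed[OF h[OF n(1)]] w(2)] by simp
  also have "\<dots> = act (inv\<^bsub>G\<^esub> (h n \<otimes>\<^bsub>G\<^esub> rep c)) w"
    using N.inv_mult_group[OF h[OF n(1)] s(1)] unfolding s_def by simp
  finally have "y \<in> act (inv\<^bsub>G\<^esub> (h n \<otimes>\<^bsub>G\<^esub> rep c)) ` U"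
    using w(1) by (simp only: image_eqI)
  moreover have "h n \<otimes>\<^bsub>G\<^esub> rep c \<in> (\<lambda>(n, c). h n \<otimes>\<^bsub>G\<^esub> rep c) ` (N \<times> S)"
    by (rule rev_image_eqI[of "(n, c)"]) (use n(1) c in simp_all)
  ultimately show "y \<in> (\<Union>t\<in>(\<lambda>(n, c). h n \<otimes>\<^bsub>G\<^esub> rep c) ` (N \<times> S). act (inv\<^bsub>G\<^esub> t) ` U)"
    by (rule UN_I[rotated])
qed

lemma separated_covering_property_lift:
  assumes fin: "finite N" and inf: "infinite (carrier G)" and M: "minimal_flow G X act"
    and scp: "separated_covering_property (G Mod N)
      (quotient_topology X (subgroup_orbit N act)) (coset_action act)"
  shows "separated_covering_property G X act"
  unfolding separated_covering_property_def
proof (intro allI impI)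
  fix D U assume "finite D \<and> D \<subseteq> carrier G \<and> openin X U \<and> U \<noteq> {}"
  then have D: "finite D" "D \<subseteq> carrier G" and U: "openin X U" "U \<noteq> {}" by auto
  obtain x0 where "x0 \<in> U" using U(2) by blast
  then have x0: "x0 \<in> U" "x0 \<in> topspace X" using openin_subset[OF U(1)] by blast+
  have x0_orbit: "\<And>n. n \<in> N \<Longrightarrow> act n x0 \<in> topspace X"
    using G_flow_act_in_topspace[OF flow N.mem_carrier x0(2)] .
  obtain h where h: "\<forall>n\<in>N. h n \<in> carrier G \<and> act (h n) (act n x0) \<in> U \<and>
      (\<forall>m\<in>N. m \<noteq> n \<longrightarrow> (\<forall>d\<in>D. \<forall>d'\<in>D. d \<otimes>\<^bsub>G\<^esub> h n \<noteq> d' \<otimes>\<^bsub>G\<^esub> h m))"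
    using minimal_flow_separated_return_times[where p = "\<lambda>n. act n x0", OF M inf U D fin] x0_orbit
    by blast
  then have hc: "\<And>n. n \<in> N \<Longrightarrow> h n \<in> carrier G" by blast
  have hsep: "d \<otimes>\<^bsub>G\<^esub> h n \<noteq> d' \<otimes>\<^bsub>G\<^esub> h m"
    if "n \<in> N" "m \<in> N" "n \<noteq> m" "d \<in> D" "d' \<in> D" for n m d d'
    using conjunct2[OF conjunct2[OF bspec[OF h that(1)]], rule_format, OF that(2) not_sym[OF that(3)] that(4,5)] .
  define U' where "U' = {u \<in> topspace X. \<forall>n\<in>N. act (h n \<otimes>\<^bsub>G\<^esub> n) u \<in> U}"
  define V where "V = subgroup_orbit N act ` U'"
  define E where "E = (\<lambda>(d, n). N #>\<^bsub>G\<^esub> (d \<otimes>\<^bsub>G\<^esub> h n)) ` (D \<times> N)"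
  have "openin X U'"
    unfolding U'_def
    by (rule openin_G_flow_all_translates[OF flow fin _ U(1)]) (intro N.m_closed hc N.mem_carrier)
  moreover have "x0 \<in> U'"
    unfolding U'_def using x0(2) h G_flow_act_mult[OF flow hc N.mem_carrier x0(2)] by simp
  ultimately have V: "openin (quotient_topology X (subgroup_orbit N act)) V" "V \<noteq> {}"
    unfolding V_def using openin_image_subgroup_orbit by blast+
  have "N #>\<^bsub>G\<^esub> (d \<otimes>\<^bsub>G\<^esub> h n) \<in> carrier (G Mod N)" if "d \<in> D" "n \<in> N" for d n
    unfolding carrier_FactGroup using D(2) hc[OF that(2)] that(1) by (intro imageI N.m_closed) auto
  then have "finite E" "E \<subseteq> carrier (G Mod N)"
    unfolding E_def using D(1) fin by auto
  then obtain S where S: "S \<subseteq> carrier (G Mod N)" "D_separated (G Mod N) E S"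
    "(\<Union>c\<in>S. coset_action act (inv\<^bsub>G Mod N\<^esub> c) ` V) = topspace (quotient_topology X (subgroup_orbit N act))"
    using scp[unfolded separated_covering_property_def, rule_format, of E V] V by blast
  have "\<forall>c\<in>S. \<exists>s. s \<in> carrier G \<and> c = N #>\<^bsub>G\<^esub> s"
    using S(1) unfolding carrier_FactGroup by blast
  then obtain rep where "\<forall>c\<in>S. rep c \<in> carrier G \<and> c = N #>\<^bsub>G\<^esub> rep c"
    by (rule bchoice[THEN exE])
  then have rep: "\<And>c. c \<in> S \<Longrightarrow> rep c \<in> carrier G \<and> c = N #>\<^bsub>G\<^esub> rep c" by blast
  define T where "T = (\<lambda>(n, c). h n \<otimes>\<^bsub>G\<^esub> rep c) ` (N \<times> S)"
  have "h n \<otimes>\<^bsub>G\<^esub> rep c \<in> carrier G" if "n \<in> N" "c \<in> S" for n c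
    using hc[OF that(1)] conjunct1[OF rep[OF that(2)]] by (rule N.m_closed)
  then have "T \<subseteq> carrier G" unfolding T_def by (auto simp: image_subset_iff)
  moreover have "D_separated G D T"
    unfolding T_def using Pi_I[of N h, OF hc] hsep
    by (rule N.D_separated_lift[where h = h and rep = rep, OF D(2) _ _ S(2)[unfolded E_def] rep])
  moreover have "(\<Union>t\<in>T. act (inv\<^bsub>G\<^esub> t) ` U) = topspace X"
    unfolding T_def using cover_lift[where h = h and rep = rep, OF hc openin_subset[OF U(1)] S(1) rep
      S(3)[unfolded V_def U'_def]] .
  ultimately show "\<exists>S. S \<subseteq> carrier G \<and> D_separated G D S \<and> (\<Union>s\<in>S. act (inv\<^bsub>G\<^esub> s) ` U) = topspace X"
    by (intro exI[of _ T] conjI)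
qed

end

theorem lemma6p3:
  fixes G :: "('g, 'm) monoid_scheme" and N :: "'g set"
    and XH :: "'a topology" and actH :: "'g set \<Rightarrow> 'a \<Rightarrow> 'a"
    and XG :: "'b topology" and actG :: "'g \<Rightarrow> 'b \<Rightarrow> 'b"
  assumes "group G"
    and "countable (carrier G)" and "infinite (carrier G)"
    and "N \<lhd> G" and "finite N"
    and "universal_minimal_flow (G Mod N) XH actH"
    and "separated_covering_property (G Mod N) XH actH"
    and "universal_minimal_flow G XG actG"
  shows "separated_covering_property G XG actG"
proof -
  have MG: "minimal_flow G XG actG" and MH: "minimal_flow (G Mod N) XH actH"
    using assms(6,8) unfolding universal_minimal_flow_def by blast+
  have FG: "G_flow G XG actG" using MG by (rule minimal_flow_G_flow)
  have MZ: "minimal_flow (G Mod N) (quotient_topology XG (subgroup_orbit N actG)) (coset_action actG)"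
    using minimal_flow_quotient_subgroup_orbit[OF assms(4) FG assms(5) MG] .
  then obtain Y :: "'g set set set topology" and actY \<phi>
    where MY: "minimal_flow (G Mod N) Y actY"
      and \<phi>: "equivariant_factor_map (G Mod N) Y actY
        (quotient_topology XG (subgroup_orbit N actG)) (coset_action actG) \<phi>"
    using minimal_flow_isomorphic_copy by blast
  obtain \<psi> where \<psi>: "equivariant_factor_map (G Mod N) XH actH Y actY \<psi>"
    using assms(6) MY unfolding universal_minimal_flow_def by blast
  have "separated_covering_property (G Mod N) Y actY"
    using separated_covering_property_factor[OF minimal_flow_G_flow[OF MH] \<psi> assms(7)] .
  then have "separated_covering_property (G Mod N)
      (quotient_topology XG (subgroup_orbit N actG)) (coset_action actG)"
    using separated_covering_property_factor[OF minimal_flow_G_flow[OF MY] \<phi>] by blast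
  then show ?thesis
    using separated_covering_property_lift[OF assms(4) FG assms(5) assms(3) MG] by blast
qed

end
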